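(* Let $(X,T)$ be a minimal topological dynamical system ($X$ compact metrisable, $T$ a group acting by homeomorphisms) with maximal equicontinuous factor map $\pi:X\to X_{max}$, let $e$ be a minimal idempotent of its Ellis semigroup, and let $\xi\in X_{max}$. The proximal relation restricted to $\pi^{-1}(\xi)$ is transitive if and only if every element of the little structure group $\Gamma_e$ fixes every point of $e(\pi^{-1}(\xi))$. In particular, the proximal relation on $X$ is transitive if and only if $\Gamma_e=\{e\}$.
   Context: The Ellis semigroup $E$ is the closure of $\{\alpha^t:t\in T\}$ in $X^X$ (pointwise convergence topology, composition as product); it has a smallest two-sided ideal $\ker E$. Minimal idempotents are the idempotents of $\ker E$; $J_{min}$ denotes the set of them. For a minimal idempotent $e$, the structure group is ${\mathcal H}_e=eEe$ (a group with identity $e$), and the little structure group $\Gamma_e$ is the subgroup of ${\mathcal H}_e$ generated by $eJ_{min}e=\{epe:p\in J_{min}\}$. Points $x,y$ are proximal if $\inf_{t} d(\alpha^t(x),\alpha^t(y))=0$ for a compatible metric $d$. *)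

theory Defs
  imports "HOL-Analysis.Analysis" "HOL-Algebra.Generated_Groups"
begin

(* A (left) action of the group 'g on the whole space 'x by homeomorphisms.
   The group T is taken with the discrete topology. *)
definition group_action_homeo :: "('g::group_add \<Rightarrow> 'x::topological_space \<Rightarrow> 'x) \<Rightarrow> bool" where
  "group_action_homeo \<alpha> \<longleftrightarrow> \<alpha> 0 = id \<and> (\<forall>s t. \<alpha> (s + t) = \<alpha> s \<circ> \<alpha> t) \<and> (\<forall>t. continuous_on UNIV (\<alpha> t))"

definition group_action_homeo_on :: "'x::topological_space set \<Rightarrow> ('g::group_add \<Rightarrow> 'x \<Rightarrow> 'x) \<Rightarrow> bool" where
  "group_action_homeo_on Z \<alpha> \<longleftrightarrow> (\<forall>t. \<alpha> t ` Z \<subseteq> Z) \<and> (\<forall>z\<in>Z. \<alpha> 0 z = z) \<and>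
     (\<forall>s t. \<forall>z\<in>Z. \<alpha> (s + t) z = \<alpha> s (\<alpha> t z)) \<and> (\<forall>t. continuous_on Z (\<alpha> t))"

definition minimal_system :: "('g::group_add \<Rightarrow> 'x::topological_space \<Rightarrow> 'x) \<Rightarrow> bool" where
  "minimal_system \<alpha> \<longleftrightarrow> (\<forall>x. closure (range (\<lambda>t. \<alpha> t x)) = UNIV)"

definition equicontinuous_on :: "'y::metric_space set \<Rightarrow> ('g \<Rightarrow> 'y \<Rightarrow> 'y) \<Rightarrow> bool" where
  "equicontinuous_on Z \<beta> \<longleftrightarrow> (\<forall>\<epsilon>>0. \<exists>\<delta>>0. \<forall>y\<in>Z. \<forall>y'\<in>Z. dist y y' < \<delta> \<longrightarrow>
       (\<forall>t. dist (\<beta> t y) (\<beta> t y') < \<epsilon>))"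

definition factor_map_onto :: "('g::group_add \<Rightarrow> 'x::topological_space \<Rightarrow> 'x) \<Rightarrow> 'z::topological_space set \<Rightarrow>
     ('g \<Rightarrow> 'z \<Rightarrow> 'z) \<Rightarrow> ('x \<Rightarrow> 'z) \<Rightarrow> bool" where
  "factor_map_onto \<alpha> Z \<gamma> \<rho> \<longleftrightarrow> group_action_homeo_on Z \<gamma> \<and> continuous_on UNIV \<rho> \<and> \<rho> ` UNIV = Z \<and>
     (\<forall>t x. \<rho> (\<alpha> t x) = \<gamma> t (\<rho> x))"

(* Maximality is tested
   against all equicontinuous factors realised inside the Hilbert cube type
   nat => real (every compact metrisable space embeds there). *)
definition max_equicontinuous_factor :: "('g::group_add \<Rightarrow> 'x::metric_space \<Rightarrow> 'x) \<Rightarrow>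
     ('g \<Rightarrow> 'y::metric_space \<Rightarrow> 'y) \<Rightarrow> ('x \<Rightarrow> 'y) \<Rightarrow> bool" where
  "max_equicontinuous_factor \<alpha> \<beta> \<pi> \<longleftrightarrow>
     factor_map_onto \<alpha> UNIV \<beta> \<pi> \<and> equicontinuous_on UNIV \<beta> \<and>
     (\<forall>(Z::(nat \<Rightarrow> real) set) \<gamma> \<rho>. compact Z \<and> factor_map_onto \<alpha> Z \<gamma> \<rho> \<and> equicontinuous_on Z \<gamma>
        \<longrightarrow> (\<exists>\<phi>. continuous_on UNIV \<phi> \<and> (\<forall>x. \<rho> x = \<phi> (\<pi> x))))"

(* Ellis semigroup: closure of {alpha^t} in X^X with the product (pointwise) topology *)
definition ellis :: "('g \<Rightarrow> 'x \<Rightarrow> 'x::topological_space) \<Rightarrow> ('x \<Rightarrow> 'x) set" where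
  "ellis \<alpha> = closure (range \<alpha>)"

definition two_sided_ideal :: "('x \<Rightarrow> 'x) set \<Rightarrow> ('x \<Rightarrow> 'x) set \<Rightarrow> bool" where
  "two_sided_ideal E I \<longleftrightarrow> I \<noteq> {} \<and> I \<subseteq> E \<and> (\<forall>p\<in>E. \<forall>q\<in>I. p \<circ> q \<in> I \<and> q \<circ> p \<in> I)"

definition kerE :: "('x \<Rightarrow> 'x) set \<Rightarrow> ('x \<Rightarrow> 'x) set" where
  "kerE E = \<Inter>{I. two_sided_ideal E I}"

definition min_idempotents :: "('x \<Rightarrow> 'x) set \<Rightarrow> ('x \<Rightarrow> 'x) set" where
  "min_idempotents E = {p \<in> kerE E. p \<circ> p = p}"

definition structure_group :: "('x \<Rightarrow> 'x) set \<Rightarrow> ('x \<Rightarrow> 'x) \<Rightarrow> ('x \<Rightarrow> 'x) monoid" where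
  "structure_group E e = \<lparr>carrier = {e \<circ> p \<circ> e | p. p \<in> E}, mult = (\<circ>), one = e\<rparr>"

definition little_structure_group :: "('x \<Rightarrow> 'x) set \<Rightarrow> ('x \<Rightarrow> 'x) \<Rightarrow> ('x \<Rightarrow> 'x) set" where
  "little_structure_group E e =
     generate (structure_group E e) {e \<circ> p \<circ> e | p. p \<in> min_idempotents E}"

definition proximal :: "('g \<Rightarrow> 'x \<Rightarrow> 'x::metric_space) \<Rightarrow> 'x \<Rightarrow> 'x \<Rightarrow> bool" where
  "proximal \<alpha> x y \<longleftrightarrow> (INF t. dist (\<alpha> t x) (\<alpha> t y)) = 0"

definition transitive_on :: "'x set \<Rightarrow> ('x \<Rightarrow> 'x \<Rightarrow> bool) \<Rightarrow> bool" where
  "transitive_on A R \<longleftrightarrow> (\<forall>x\<in>A. \<forall>y\<in>A. \<forall>z\<in>A. R x y \<longrightarrow> R y z \<longrightarrow> R x z)"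

end

theory Submission
  imports Defs
begin

(*
  Proximality is read off the Ellis semigroup E: x and y are proximal iff p x = p y for some
  p in E. On the image of the minimal idempotent e there are no distinct proximal points, since
  e p e lies in the group eEe and can be inverted. If the little structure group fixes e x, then
  e p e x = e p x for every p in E: choose an idempotent v in Ee with v x = x, put c = e p v in
  eEe, and note that c^-1 (e p e) = e u e for the minimal idempotent u = v c^-1 e p. Hence on a
  fibre whose e-image is fixed by Gamma_e, proximality means e x = e y, a transitive relation.
  Conversely, if proximality is transitive on the fibre and z = e z, then z is proximal to u z,
  which is proximal to e u z; so z = e u z = (e u e) z for every minimal idempotent u, and the
  generators of Gamma_e fix z. Fibres of an equicontinuous factor, and X itself, are unions of
  proximality classes, so both statements are instances of one criterion.
*)

section \<open>Compact semigroups of self-maps\<close>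

lemma compact_imp_closed_fun:
  fixes S :: "('a \<Rightarrow> 'b::t2_space) set"
  assumes "compact S"
  shows "closed S"
proof -
  have "Hausdorff_space (euclidean :: 'b topology)"
    unfolding Hausdorff_space_def disjnt_def using hausdorff by fastforce
  then have "Hausdorff_space (product_topology (\<lambda>_::'a. euclidean :: 'b topology) UNIV)"
    by (simp add: Hausdorff_space_product_topology)
  then have "Hausdorff_space (euclidean :: ('a \<Rightarrow> 'b) topology)"
    by (simp add: euclidean_product_topology)
  then show ?thesis
    using assms compactin_imp_closedin by fastforce
qed

lemma compact_UNIV_fun:
  assumes "compact (UNIV :: 'b::topological_space set)"
  shows "compact (UNIV :: ('a \<Rightarrow> 'b) set)"
proof -
  have "compact_space (euclidean :: 'b topology)"
    using assms by (simp add: compact_space_def)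
  then have "compact_space (product_topology (\<lambda>_::'a. euclidean :: 'b topology) UNIV)"
    by (simp add: compact_space_product_topology)
  then show ?thesis
    by (simp add: compact_space_def euclidean_product_topology)
qed

lemma continuous_on_eval: "continuous_on S (\<lambda>f::'a \<Rightarrow> 'b::topological_space. f x)"
  by (rule continuous_on_subset[OF continuous_on_product_coordinates]) simp

lemma continuous_on_comp_right: "continuous_on S (\<lambda>p::'a \<Rightarrow> 'b::topological_space. p \<circ> q)"
  by (intro continuous_on_coordinatewise_then_product) (simp add: continuous_on_eval)

lemma continuous_on_comp_left:
  assumes "continuous_on UNIV h"
  shows "continuous_on S (\<lambda>p::'a \<Rightarrow> 'b::topological_space. h \<circ> p)"
  by (intro continuous_on_coordinatewise_then_product)
     (simp add: continuous_on_compose2[OF assms continuous_on_eval])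

lemma compact_chain_Inter_nonempty:
  fixes \<D> :: "'a::topological_space set set"
  assumes "compact K" "\<D> \<noteq> {}"
    and closed_sub: "\<And>S. S \<in> \<D> \<Longrightarrow> closed S \<and> S \<noteq> {} \<and> S \<subseteq> K"
    and comparable: "\<And>S T. S \<in> \<D> \<Longrightarrow> T \<in> \<D> \<Longrightarrow> S \<subseteq> T \<or> T \<subseteq> S"
  shows "\<Inter>\<D> \<noteq> {}"
proof -
  have "K \<inter> \<Inter>\<D> \<noteq> {}"
  proof (rule compact_imp_fip[OF \<open>compact K\<close>])
    show "closed T" if "T \<in> \<D>" for T using closed_sub that by blast
  next
    fix \<F> assume "finite \<F>" "\<F> \<subseteq> \<D>"
    obtain S where "S \<in> \<D>" "S \<subseteq> \<Inter>\<F>"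
    proof (cases "\<F> = {}")
      case True
      then show thesis using that \<open>\<D> \<noteq> {}\<close> by blast
    next
      case False
      have "subset.chain \<D> \<F>"
        unfolding subset_chain_def using comparable \<open>\<F> \<subseteq> \<D>\<close> by blast
      then have "\<Inter>\<F> \<in> \<F>" using Inter_in_chain \<open>finite \<F>\<close> False by blast
      then show thesis using that \<open>\<F> \<subseteq> \<D>\<close> by blast
    qed
    moreover have "S \<noteq> {}" "S \<subseteq> K" using closed_sub \<open>S \<in> \<D>\<close> by blast+
    ultimately show "K \<inter> \<Inter>\<F> \<noteq> {}" by blast
  qed
  then show ?thesis by blast
qed

text \<open>Zorn's lemma for reverse inclusion, applied to the complements.\<close>
lemma compact_closed_family_has_minimal:
  fixes \<A> :: "'a::topological_space set set"
  assumes "compact K" and "\<A> \<noteq> {}"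
    and closed_sub: "\<And>S. S \<in> \<A> \<Longrightarrow> closed S \<and> S \<noteq> {} \<and> S \<subseteq> K"
    and chain_Inter: "\<And>\<C>. \<C> \<noteq> {} \<Longrightarrow> subset.chain \<A> \<C> \<Longrightarrow> \<Inter>\<C> \<noteq> {} \<Longrightarrow> \<Inter>\<C> \<in> \<A>"
  shows "\<exists>M\<in>\<A>. \<forall>S\<in>\<A>. S \<subseteq> M \<longrightarrow> S = M"
proof -
  have "\<exists>M\<in>uminus ` \<A>. \<forall>S\<in>uminus ` \<A>. M \<subseteq> S \<longrightarrow> S = M"
  proof (rule subset_Zorn_nonempty)
    show "uminus ` \<A> \<noteq> {}" using \<open>\<A> \<noteq> {}\<close> by simp
  next
    fix \<C> assume "\<C> \<noteq> {}" and chain: "subset.chain (uminus ` \<A>) \<C>"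
    define \<D> where "\<D> = uminus ` \<C>"
    have "\<D> \<noteq> {}" using \<open>\<C> \<noteq> {}\<close> by (simp add: \<D>_def)
    have "\<D> \<subseteq> \<A>"
      using chain by (auto simp: \<D>_def subset_chain_def)
    moreover have comparable: "S \<subseteq> T \<or> T \<subseteq> S" if ST: "S \<in> \<D>" "T \<in> \<D>" for S T
    proof -
      obtain S' T' where "S' \<in> \<C>" "T' \<in> \<C>" "S = - S'" "T = - T'"
        using ST by (auto simp: \<D>_def)
      then show ?thesis using chain by (simp add: subset_chain_def)
    qed
    ultimately have "subset.chain \<A> \<D>"
      by (simp add: subset_chain_def)
    moreover have "\<Inter>\<D> \<noteq> {}"
      using compact_chain_Inter_nonempty[OF \<open>compact K\<close> \<open>\<D> \<noteq> {}\<close>] closed_sub \<open>\<D> \<subseteq> \<A>\<close> comparable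
      by blast
    ultimately have "\<Inter>\<D> \<in> \<A>" using chain_Inter \<open>\<D> \<noteq> {}\<close> by blast
    moreover have "\<Union>\<C> = - \<Inter>\<D>" by (auto simp: \<D>_def)
    ultimately show "\<Union>\<C> \<in> uminus ` \<A>" by simp
  qed
  then show ?thesis by simp
qed

lemma minimal_closed_subset_exists:
  fixes S :: "'a::topological_space set"
  assumes "compact S" "closed S" "S \<noteq> {}" "P S"
    and P_Inter: "\<And>\<C>. \<C> \<noteq> {} \<Longrightarrow> (\<And>C. C \<in> \<C> \<Longrightarrow> P C) \<Longrightarrow> P (\<Inter>\<C>)"
  shows "\<exists>M\<subseteq>S. closed M \<and> M \<noteq> {} \<and> P M \<and> (\<forall>N\<subseteq>M. closed N \<longrightarrow> N \<noteq> {} \<longrightarrow> P N \<longrightarrow> N = M)"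
proof -
  define \<A> where "\<A> = {A. A \<subseteq> S \<and> closed A \<and> A \<noteq> {} \<and> P A}"
  have "\<exists>M\<in>\<A>. \<forall>N\<in>\<A>. N \<subseteq> M \<longrightarrow> N = M"
  proof (rule compact_closed_family_has_minimal[OF \<open>compact S\<close>])
    show "\<A> \<noteq> {}" using assms(2-4) unfolding \<A>_def by blast
    show "\<And>A. A \<in> \<A> \<Longrightarrow> closed A \<and> A \<noteq> {} \<and> A \<subseteq> S" unfolding \<A>_def by blast
  next
    fix \<C> assume "\<C> \<noteq> {}" "subset.chain \<A> \<C>" "\<Inter>\<C> \<noteq> {}"
    then have members: "C \<subseteq> S" "closed C" "P C" if "C \<in> \<C>" for C
      using that unfolding \<A>_def subset_chain_def by auto
    have "\<Inter>\<C> \<subseteq> S" using members(1) \<open>\<C> \<noteq> {}\<close> by blast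
    moreover have "closed (\<Inter>\<C>)" using members(2) by (rule closed_Inter[rule_format])
    moreover have "P (\<Inter>\<C>)" by (rule P_Inter[OF \<open>\<C> \<noteq> {}\<close> members(3)])
    ultimately show "\<Inter>\<C> \<in> \<A>" using \<open>\<Inter>\<C> \<noteq> {}\<close> unfolding \<A>_def by blast
  qed
  then obtain M where "M \<in> \<A>" and minimal: "\<And>N. N \<in> \<A> \<Longrightarrow> N \<subseteq> M \<Longrightarrow> N = M" by blast
  then have "M \<subseteq> S" "closed M" "M \<noteq> {}" "P M" unfolding \<A>_def by auto
  moreover have "N = M" if "N \<subseteq> M" "closed N" "N \<noteq> {}" "P N" for N
    using minimal[of N] that \<open>M \<subseteq> S\<close> unfolding \<A>_def by blast
  ultimately show ?thesis by blast
qed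

definition left_ideal :: "('a \<Rightarrow> 'a) set \<Rightarrow> ('a \<Rightarrow> 'a) set \<Rightarrow> bool" where
  "left_ideal E L \<longleftrightarrow> L \<noteq> {} \<and> L \<subseteq> E \<and> (\<forall>p\<in>E. \<forall>l\<in>L. p \<circ> l \<in> L)"

definition minimal_left_ideal :: "('a \<Rightarrow> 'a) set \<Rightarrow> ('a \<Rightarrow> 'a) set \<Rightarrow> bool" where
  "minimal_left_ideal E L \<longleftrightarrow> left_ideal E L \<and> (\<forall>L'. left_ideal E L' \<longrightarrow> L' \<subseteq> L \<longrightarrow> L' = L)"

lemma left_idealD:
  assumes "left_ideal E L"
  shows "L \<noteq> {}" "L \<subseteq> E" "\<And>p l. p \<in> E \<Longrightarrow> l \<in> L \<Longrightarrow> p \<circ> l \<in> L"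
  using assms unfolding left_ideal_def by auto

lemma minimal_left_idealD:
  assumes "minimal_left_ideal E L"
  shows "left_ideal E L" "\<And>L'. left_ideal E L' \<Longrightarrow> L' \<subseteq> L \<Longrightarrow> L' = L"
  using assms unfolding minimal_left_ideal_def by auto

locale compact_fun_semigroup =
  fixes E :: "('a \<Rightarrow> 'a::t2_space) set"
  assumes compact: "compact E"
    and nonempty: "E \<noteq> {}"
    and comp_closed: "\<And>p q. p \<in> E \<Longrightarrow> q \<in> E \<Longrightarrow> p \<circ> q \<in> E"
begin

lemma closed: "closed E"
  using compact by (rule compact_imp_closed_fun)

lemma compact_comp_right_image: "compact ((\<lambda>p. p \<circ> q) ` E)"
  using compact by (rule compact_continuous_image[OF continuous_on_comp_right])

lemma left_ideal_comp_right_image: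
  assumes "q \<in> E" shows "left_ideal E ((\<lambda>p. p \<circ> q) ` E)"
  using nonempty assms comp_closed unfolding left_ideal_def by (auto simp: o_assoc)

text \<open>Ellis--Numakura: if \<open>A\<close> is a minimal closed subsemigroup and \<open>a \<in> A\<close>, then \<open>A \<circ> a\<close> and
  \<open>{b \<in> A. b \<circ> a = a}\<close> are closed subsemigroups of \<open>A\<close>, hence both equal \<open>A\<close>.\<close>
lemma idempotent_exists: "\<exists>v\<in>E. v \<circ> v = v"
proof -
  have "\<exists>A\<subseteq>E. closed A \<and> A \<noteq> {} \<and> (\<forall>a\<in>A. \<forall>b\<in>A. a \<circ> b \<in> A) \<and>
      (\<forall>B\<subseteq>A. closed B \<longrightarrow> B \<noteq> {} \<longrightarrow> (\<forall>a\<in>B. \<forall>b\<in>B. a \<circ> b \<in> B) \<longrightarrow> B = A)"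
    by (rule minimal_closed_subset_exists[OF compact closed nonempty,
          where P = "\<lambda>A. \<forall>a\<in>A. \<forall>b\<in>A. a \<circ> b \<in> A"]) (use comp_closed in blast)+
  then obtain A where A: "A \<subseteq> E" "closed A" "A \<noteq> {}" and semigroup: "\<forall>a\<in>A. \<forall>b\<in>A. a \<circ> b \<in> A"
    and minimal: "\<And>B. B \<subseteq> A \<Longrightarrow> closed B \<Longrightarrow> B \<noteq> {} \<Longrightarrow> \<forall>a\<in>B. \<forall>b\<in>B. a \<circ> b \<in> B \<Longrightarrow> B = A"
    by blast
  obtain a where "a \<in> A" using A by blast
  have "compact A" using compact_Int_closed[OF compact \<open>closed A\<close>] \<open>A \<subseteq> E\<close> by (simp add: Int_absorb1)
  have "(\<lambda>b. b \<circ> a) ` A = A"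
  proof (rule minimal)
    show "closed ((\<lambda>b. b \<circ> a) ` A)"
      by (rule compact_imp_closed_fun[OF compact_continuous_image[OF continuous_on_comp_right \<open>compact A\<close>]])
    show "\<forall>x\<in>(\<lambda>b. b \<circ> a) ` A. \<forall>y\<in>(\<lambda>b. b \<circ> a) ` A. x \<circ> y \<in> (\<lambda>b. b \<circ> a) ` A"
    proof (intro ballI)
      fix x y assume "x \<in> (\<lambda>b. b \<circ> a) ` A" "y \<in> (\<lambda>b. b \<circ> a) ` A"
      then obtain b c where "b \<in> A" "c \<in> A" "x = b \<circ> a" "y = c \<circ> a" by blast
      then show "x \<circ> y \<in> (\<lambda>b. b \<circ> a) ` A"
        using semigroup \<open>a \<in> A\<close> by (auto simp: o_assoc intro!: image_eqI[of _ _ "b \<circ> a \<circ> c"])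
    qed
  qed (use semigroup \<open>a \<in> A\<close> in auto)
  then obtain b where "b \<in> A" "b \<circ> a = a" using \<open>a \<in> A\<close> by (metis imageE)
  have "{b \<in> A. b \<circ> a = a} = A"
  proof (rule minimal)
    have "{b. b \<circ> a = a} = {b. \<forall>x. b (a x) = a x}" by (auto simp: fun_eq_iff)
    moreover have "closed {b. \<forall>x. b (a x) = a x}"
      by (intro closed_Collect_all closed_Collect_eq continuous_on_eval continuous_on_const)
    ultimately show "closed {b \<in> A. b \<circ> a = a}"
      using closed_Int[OF \<open>closed A\<close>] by (simp add: Collect_conj_eq)
    show "{b \<in> A. b \<circ> a = a} \<noteq> {}" using \<open>b \<in> A\<close> \<open>b \<circ> a = a\<close> by blast
    show "\<forall>x\<in>{b \<in> A. b \<circ> a = a}. \<forall>y\<in>{b \<in> A. b \<circ> a = a}. x \<circ> y \<in> {b \<in> A. b \<circ> a = a}"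
    proof (intro ballI)
      fix x y assume "x \<in> {b \<in> A. b \<circ> a = a}" "y \<in> {b \<in> A. b \<circ> a = a}"
      then show "x \<circ> y \<in> {b \<in> A. b \<circ> a = a}" using semigroup by (simp add: comp_assoc)
    qed
  qed blast
  then have "a \<circ> a = a" using \<open>a \<in> A\<close> by blast
  then show ?thesis using \<open>a \<in> A\<close> \<open>A \<subseteq> E\<close> by blast
qed

lemma minimal_left_ideal_exists: "\<exists>L. minimal_left_ideal E L"
proof -
  have "\<exists>M\<subseteq>E. closed M \<and> M \<noteq> {} \<and> (\<forall>p\<in>E. \<forall>l\<in>M. p \<circ> l \<in> M) \<and>
      (\<forall>L\<subseteq>M. closed L \<longrightarrow> L \<noteq> {} \<longrightarrow> (\<forall>p\<in>E. \<forall>l\<in>L. p \<circ> l \<in> L) \<longrightarrow> L = M)"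
    by (rule minimal_closed_subset_exists[OF compact closed nonempty,
          where P = "\<lambda>L. \<forall>p\<in>E. \<forall>l\<in>L. p \<circ> l \<in> L"]) (use comp_closed in blast)+
  then obtain M where "M \<subseteq> E" "M \<noteq> {}" "\<forall>p\<in>E. \<forall>l\<in>M. p \<circ> l \<in> M"
    and minimal: "\<And>L. L \<subseteq> M \<Longrightarrow> closed L \<Longrightarrow> L \<noteq> {} \<Longrightarrow> \<forall>p\<in>E. \<forall>l\<in>L. p \<circ> l \<in> L \<Longrightarrow> L = M"
    by blast
  then have "left_ideal E M" unfolding left_ideal_def by blast
  have "L = M" if L: "left_ideal E L" "L \<subseteq> M" for L
  proof -
    obtain q where "q \<in> L" using left_idealD(1)[OF L(1)] by blast
    then have "(\<lambda>p. p \<circ> q) ` E \<subseteq> L" "q \<in> E"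
      using left_idealD(2,3)[OF L(1)] by auto
    moreover have "(\<lambda>p. p \<circ> q) ` E = M"
    proof (rule minimal)
      show "(\<lambda>p. p \<circ> q) ` E \<subseteq> M" using calculation(1) \<open>L \<subseteq> M\<close> by blast
      show "closed ((\<lambda>p. p \<circ> q) ` E)" by (rule compact_imp_closed_fun[OF compact_comp_right_image])
      show "(\<lambda>p. p \<circ> q) ` E \<noteq> {}" "\<forall>p\<in>E. \<forall>l\<in>(\<lambda>p. p \<circ> q) ` E. p \<circ> l \<in> (\<lambda>p. p \<circ> q) ` E"
        using left_idealD[OF left_ideal_comp_right_image[OF \<open>q \<in> E\<close>]] by blast+
    qed
    ultimately show "L = M" using \<open>L \<subseteq> M\<close> by blast
  qed
  then show ?thesis using \<open>left_ideal E M\<close> unfolding minimal_left_ideal_def by blast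
qed

lemma minimal_left_ideal_eq_comp_right_image:
  assumes L: "minimal_left_ideal E L" and "r \<in> L"
  shows "(\<lambda>p. p \<circ> r) ` E = L"
proof (rule minimal_left_idealD(2)[OF L])
  have "r \<in> E" using \<open>r \<in> L\<close> left_idealD(2)[OF minimal_left_idealD(1)[OF L]] by blast
  then show "left_ideal E ((\<lambda>p. p \<circ> r) ` E)" by (rule left_ideal_comp_right_image)
  show "(\<lambda>p. p \<circ> r) ` E \<subseteq> L" using \<open>r \<in> L\<close> left_idealD(3)[OF minimal_left_idealD(1)[OF L]] by blast
qed

lemma minimal_left_ideal_comp_right:
  assumes L: "minimal_left_ideal E L" and "q \<in> E"
  shows "minimal_left_ideal E ((\<lambda>l. l \<circ> q) ` L)"
proof -
  note ideal = left_idealD[OF minimal_left_idealD(1)[OF L]]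
  have "left_ideal E ((\<lambda>l. l \<circ> q) ` L)"
    unfolding left_ideal_def
  proof (intro conjI ballI)
    show "(\<lambda>l. l \<circ> q) ` L \<noteq> {}" using ideal(1) by blast
    show "(\<lambda>l. l \<circ> q) ` L \<subseteq> E" using ideal(2) \<open>q \<in> E\<close> comp_closed by blast
  next
    fix p l' assume "p \<in> E" "l' \<in> (\<lambda>l. l \<circ> q) ` L"
    then obtain l where "l \<in> L" "l' = l \<circ> q" by blast
    then have "p \<circ> l' = (p \<circ> l) \<circ> q" "p \<circ> l \<in> L" using ideal(3) \<open>p \<in> E\<close> by (auto simp: o_assoc)
    then show "p \<circ> l' \<in> (\<lambda>l. l \<circ> q) ` L" by blast
  qed
  moreover have "L' = (\<lambda>l. l \<circ> q) ` L"
    if L': "left_ideal E L'" "L' \<subseteq> (\<lambda>l. l \<circ> q) ` L" for L'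
  proof -
    have "left_ideal E {l \<in> L. l \<circ> q \<in> L'}"
      unfolding left_ideal_def
    proof (intro conjI ballI)
      obtain l' where "l' \<in> L'" using left_idealD(1)[OF L'(1)] by blast
      then show "{l \<in> L. l \<circ> q \<in> L'} \<noteq> {}" using L'(2) by blast
      show "{l \<in> L. l \<circ> q \<in> L'} \<subseteq> E" using ideal(2) by blast
    next
      fix p l assume "p \<in> E" "l \<in> {l \<in> L. l \<circ> q \<in> L'}"
      then have "p \<circ> l \<in> L" "p \<circ> (l \<circ> q) \<in> L'"
        using ideal(3) left_idealD(3)[OF L'(1)] by auto
      then show "p \<circ> l \<in> {l \<in> L. l \<circ> q \<in> L'}" by (simp add: o_assoc)
    qed
    then have "{l \<in> L. l \<circ> q \<in> L'} = L"
      by (rule minimal_left_idealD(2)[OF L]) blast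
    then show ?thesis using L'(2) by blast
  qed
  ultimately show ?thesis unfolding minimal_left_ideal_def by blast
qed

lemma two_sided_ideal_self: "two_sided_ideal E E"
  using nonempty comp_closed unfolding two_sided_ideal_def by blast

lemma kerE_subset: "kerE E \<subseteq> E"
  using two_sided_ideal_self unfolding kerE_def by blast

lemma kerE_comp_left: "u \<in> kerE E \<Longrightarrow> p \<in> E \<Longrightarrow> p \<circ> u \<in> kerE E"
  and kerE_comp_right: "u \<in> kerE E \<Longrightarrow> p \<in> E \<Longrightarrow> u \<circ> p \<in> kerE E"
  unfolding kerE_def two_sided_ideal_def by blast+

lemma two_sided_ideal_left_ideal_comp:
  assumes "left_ideal E L"
  shows "two_sided_ideal E {l \<circ> q | l q. l \<in> L \<and> q \<in> E}" (is "two_sided_ideal E ?LE")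
  unfolding two_sided_ideal_def
proof (intro conjI ballI)
  show "?LE \<noteq> {}" using left_idealD(1)[OF assms] nonempty by blast
  show "?LE \<subseteq> E" using left_idealD(2)[OF assms] comp_closed by blast
next
  fix p i assume "p \<in> E" "i \<in> ?LE"
  then obtain l q where "l \<in> L" "q \<in> E" "i = l \<circ> q" by blast
  have "p \<circ> i = (p \<circ> l) \<circ> q" "p \<circ> l \<in> L"
    using \<open>i = l \<circ> q\<close> left_idealD(3)[OF assms] \<open>p \<in> E\<close> \<open>l \<in> L\<close> by (auto simp: o_assoc)
  then show "p \<circ> i \<in> ?LE" using \<open>q \<in> E\<close> by blast
  have "i \<circ> p = l \<circ> (q \<circ> p)" "q \<circ> p \<in> E"
    using \<open>i = l \<circ> q\<close> comp_closed \<open>p \<in> E\<close> \<open>q \<in> E\<close> by (auto simp: o_assoc)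
  then show "i \<circ> p \<in> ?LE" using \<open>l \<in> L\<close> by blast
qed

text \<open>Since \<open>e\<close> lies in the two-sided ideal \<open>L \<circ> E\<close>, we have \<open>e = l \<circ> q\<close>, and \<open>E \<circ> e\<close> is a left
  ideal inside the minimal left ideal \<open>L \<circ> q\<close>.\<close>
lemma minimal_left_ideal_kerE:
  assumes "e \<in> kerE E"
  shows "minimal_left_ideal E ((\<lambda>p. p \<circ> e) ` E)"
proof -
  obtain L where L: "minimal_left_ideal E L" using minimal_left_ideal_exists by blast
  then have "two_sided_ideal E {l \<circ> q | l q. l \<in> L \<and> q \<in> E}"
    by (intro two_sided_ideal_left_ideal_comp minimal_left_idealD(1))
  then have "e \<in> {l \<circ> q | l q. l \<in> L \<and> q \<in> E}" using assms unfolding kerE_def by blast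
  then obtain l q where "l \<in> L" "q \<in> E" "e = l \<circ> q" by blast
  have minimal: "minimal_left_ideal E ((\<lambda>l. l \<circ> q) ` L)"
    using minimal_left_ideal_comp_right[OF L \<open>q \<in> E\<close>] .
  have "(\<lambda>p. p \<circ> e) ` E = (\<lambda>l. l \<circ> q) ` L"
  proof (rule minimal_left_idealD(2)[OF minimal])
    show "left_ideal E ((\<lambda>p. p \<circ> e) ` E)"
      using left_ideal_comp_right_image assms kerE_subset by blast
    show "(\<lambda>p. p \<circ> e) ` E \<subseteq> (\<lambda>l. l \<circ> q) ` L"
      using \<open>e = l \<circ> q\<close> \<open>l \<in> L\<close> left_idealD(3)[OF minimal_left_idealD(1)[OF L]] by (auto simp: o_assoc)
  qed
  then show ?thesis using minimal by simp
qed

end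

section \<open>The structure group of a minimal idempotent\<close>

definition semigroup_proximal :: "('a \<Rightarrow> 'a) set \<Rightarrow> 'a \<Rightarrow> 'a \<Rightarrow> bool" where
  "semigroup_proximal E x y \<longleftrightarrow> (\<exists>p\<in>E. p x = p y)"

locale compact_fun_semigroup_min_idempotent = compact_fun_semigroup +
  fixes e :: "'a::t2_space \<Rightarrow> 'a"
  assumes min_idempotent: "e \<in> min_idempotents E"
begin

abbreviation H where "H \<equiv> structure_group E e"
abbreviation \<Gamma> where "\<Gamma> \<equiv> little_structure_group E e"

lemma e_in_kerE: "e \<in> kerE E"
  using min_idempotent by (simp add: min_idempotents_def)

lemma e_in_E: "e \<in> E"
  using e_in_kerE kerE_subset by blast

lemma idempotent: "e \<circ> e = e"
  using min_idempotent by (simp add: min_idempotents_def)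

lemma idempotent_apply [simp]: "e (e x) = e x"
  using idempotent by (metis comp_apply)

lemma structure_group_mult [simp]: "x \<otimes>\<^bsub>H\<^esub> y = x \<circ> y"
  and structure_group_one [simp]: "\<one>\<^bsub>H\<^esub> = e"
  by (simp_all add: structure_group_def)

lemma sandwich_in_structure_group: "p \<in> E \<Longrightarrow> e \<circ> p \<circ> e \<in> carrier H"
  by (auto simp: structure_group_def)

lemma carrier_structure_group_iff: "g \<in> carrier H \<longleftrightarrow> g \<in> E \<and> e \<circ> g = g \<and> g \<circ> e = g"
proof
  assume "g \<in> carrier H"
  then obtain p where "p \<in> E" "g = e \<circ> p \<circ> e" by (auto simp: structure_group_def)
  then show "g \<in> E \<and> e \<circ> g = g \<and> g \<circ> e = g"
    using comp_closed e_in_E idempotent by (simp add: comp_assoc) (simp add: o_assoc)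
next
  assume "g \<in> E \<and> e \<circ> g = g \<and> g \<circ> e = g"
  then show "g \<in> carrier H" using sandwich_in_structure_group[of g] by simp
qed

text \<open>\<open>E \<circ> e\<close> is a minimal left ideal, so it is generated by any of its elements \<open>d\<close>.\<close>
lemma left_inverse_exists:
  assumes "d \<in> E" "d \<circ> e = d"
  shows "\<exists>q\<in>E. q \<circ> d = e"
proof -
  have "d \<in> (\<lambda>p. p \<circ> e) ` E" using assms by (metis image_eqI)
  then have "(\<lambda>p. p \<circ> d) ` E = (\<lambda>p. p \<circ> e) ` E"
    by (rule minimal_left_ideal_eq_comp_right_image[OF minimal_left_ideal_kerE[OF e_in_kerE]])
  moreover have "e \<in> (\<lambda>p. p \<circ> e) ` E" using e_in_E idempotent by (metis image_eqI)
  ultimately have "e \<in> (\<lambda>p. p \<circ> d) ` E" by simp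
  then show ?thesis by force
qed

lemma group_structure_group: "group H"
proof (rule groupI)
  fix x y assume "x \<in> carrier H" "y \<in> carrier H"
  then show "x \<otimes>\<^bsub>H\<^esub> y \<in> carrier H"
    using comp_closed by (auto simp: carrier_structure_group_iff comp_assoc) (metis comp_assoc)
next
  show "\<one>\<^bsub>H\<^esub> \<in> carrier H" using e_in_E idempotent by (simp add: carrier_structure_group_iff)
next
  fix x y z assume "x \<in> carrier H" "y \<in> carrier H" "z \<in> carrier H"
  then show "x \<otimes>\<^bsub>H\<^esub> y \<otimes>\<^bsub>H\<^esub> z = x \<otimes>\<^bsub>H\<^esub> (y \<otimes>\<^bsub>H\<^esub> z)" by (simp add: comp_assoc)
next
  fix x assume "x \<in> carrier H"
  then show "\<one>\<^bsub>H\<^esub> \<otimes>\<^bsub>H\<^esub> x = x" by (simp add: carrier_structure_group_iff)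
next
  fix x assume "x \<in> carrier H"
  then have x: "x \<in> E" "e \<circ> x = x" "x \<circ> e = x" by (auto simp: carrier_structure_group_iff)
  then obtain q where "q \<in> E" "q \<circ> x = e" using left_inverse_exists by blast
  have "(e \<circ> q \<circ> e) \<circ> x = e \<circ> (q \<circ> (e \<circ> x))" by (simp add: comp_assoc)
  also have "\<dots> = e" using x \<open>q \<circ> x = e\<close> idempotent by simp
  finally show "\<exists>y\<in>carrier H. y \<otimes>\<^bsub>H\<^esub> x = \<one>\<^bsub>H\<^esub>"
    using sandwich_in_structure_group[OF \<open>q \<in> E\<close>] by auto
qed

lemma structure_group_inverse:
  assumes "g \<in> carrier H"
  shows "inv\<^bsub>H\<^esub> g \<in> carrier H" "inv\<^bsub>H\<^esub> g \<circ> g = e" "g \<circ> inv\<^bsub>H\<^esub> g = e"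
  using group.inv_closed[OF group_structure_group assms] group.l_inv[OF group_structure_group assms]
    group.r_inv[OF group_structure_group assms] by simp_all

lemma little_structure_group_subset: "\<Gamma> \<subseteq> carrier H"
  unfolding little_structure_group_def
  by (rule group.generate_incl[OF group_structure_group])
     (auto simp: min_idempotents_def intro: sandwich_in_structure_group dest: subsetD[OF kerE_subset])

lemma little_structure_group_fixes:
  assumes gen: "\<And>u. u \<in> min_idempotents E \<Longrightarrow> e (u z) = z" and "e z = z" and "\<gamma> \<in> \<Gamma>"
  shows "\<gamma> z = z"
  using \<open>\<gamma> \<in> \<Gamma>\<close> unfolding little_structure_group_def
proof (induction rule: generate.induct)
  case one
  then show ?case using \<open>e z = z\<close> by simp
next
  case (incl h)
  then show ?case using gen \<open>e z = z\<close> by auto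
next
  case (inv h)
  then have "h \<in> carrier H" "h z = z" using gen \<open>e z = z\<close> little_structure_group_subset
    by (auto simp: little_structure_group_def intro: generate.incl)
  then have "(inv\<^bsub>H\<^esub> h) z = (inv\<^bsub>H\<^esub> h \<circ> h) z" by simp
  then show ?case using structure_group_inverse(2)[OF \<open>h \<in> carrier H\<close>] \<open>e z = z\<close> by simp
next
  case (eng h1 h2)
  then show ?case by simp
qed

lemma little_structure_group_eq_singleton_iff:
  "\<Gamma> = {e} \<longleftrightarrow> (\<forall>\<gamma>\<in>\<Gamma>. \<forall>z\<in>range e. \<gamma> z = z)"
proof
  assume "\<Gamma> = {e}"
  then show "\<forall>\<gamma>\<in>\<Gamma>. \<forall>z\<in>range e. \<gamma> z = z" by auto
next
  assume fixing: "\<forall>\<gamma>\<in>\<Gamma>. \<forall>z\<in>range e. \<gamma> z = z"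
  have "\<gamma> = e" if "\<gamma> \<in> \<Gamma>" for \<gamma>
  proof
    fix w
    have "\<gamma> \<circ> e = \<gamma>" using that little_structure_group_subset carrier_structure_group_iff by blast
    then have "\<gamma> w = \<gamma> (e w)" by (metis comp_apply)
    then show "\<gamma> w = e w" using fixing that by simp
  qed
  moreover have "e \<in> \<Gamma>"
    using generate.one[of H] unfolding little_structure_group_def by simp
  ultimately show "\<Gamma> = {e}" by blast
qed

lemma proximal_fixed_points_eq:
  assumes "e x = x" "e y = y" "semigroup_proximal E x y"
  shows "x = y"
proof -
  obtain p where "p \<in> E" "p x = p y" using assms(3) unfolding semigroup_proximal_def by blast
  define d where "d = e \<circ> p \<circ> e"
  have "d \<in> carrier H" unfolding d_def using \<open>p \<in> E\<close> by (rule sandwich_in_structure_group)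
  have "d x = d y" using assms(1,2) \<open>p x = p y\<close> by (simp add: d_def)
  then have "(inv\<^bsub>H\<^esub> d \<circ> d) x = (inv\<^bsub>H\<^esub> d \<circ> d) y" by simp
  then show "x = y" using structure_group_inverse(2)[OF \<open>d \<in> carrier H\<close>] assms(1,2) by simp
qed

text \<open>Ellis--Numakura applied to the closed subsemigroup \<open>{q \<in> E \<circ> e. q x = x}\<close>.\<close>
lemma idempotent_fixing_point:
  assumes "x \<in> (\<lambda>p. p (e x)) ` E"
  shows "\<exists>v\<in>kerE E. v \<circ> v = v \<and> v x = x \<and> v \<circ> e = v \<and> e \<circ> v = e"
proof -
  define L where "L = (\<lambda>p. p \<circ> e) ` E"
  have L: "minimal_left_ideal E L" unfolding L_def by (rule minimal_left_ideal_kerE[OF e_in_kerE])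
  note ideal = left_idealD[OF minimal_left_idealD(1)[OF L]]
  define S where "S = L \<inter> {q. q x = x}"
  have "compact S"
    unfolding S_def L_def
    by (intro compact_Int_closed compact_comp_right_image closed_Collect_eq continuous_on_eval continuous_on_const)
  moreover have "S \<noteq> {}"
    using assms unfolding S_def L_def by force
  moreover have "a \<circ> b \<in> S" if "a \<in> S" "b \<in> S" for a b
    using that ideal(2,3) unfolding S_def by auto
  ultimately interpret S: compact_fun_semigroup S
    by unfold_locales
  obtain v where "v \<in> S" "v \<circ> v = v" using S.idempotent_exists by blast
  then obtain p where "p \<in> E" "v = p \<circ> e" "v x = x" unfolding S_def L_def by blast
  have "v \<in> kerE E" using kerE_comp_left[OF e_in_kerE \<open>p \<in> E\<close>] \<open>v = p \<circ> e\<close> by simp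
  have "v \<circ> e = v" using \<open>v = p \<circ> e\<close> idempotent by (simp add: comp_assoc)
  have "(\<lambda>p. p \<circ> v) ` E = L"
    using minimal_left_ideal_eq_comp_right_image[OF L] \<open>v \<in> S\<close> unfolding S_def by blast
  moreover have "e \<in> L" using e_in_E idempotent unfolding L_def by (metis image_eqI)
  ultimately obtain r where "e = r \<circ> v" by blast
  then have "e \<circ> v = e" using \<open>v \<circ> v = v\<close> by (simp add: comp_assoc)
  then show ?thesis
    using \<open>v \<in> kerE E\<close> \<open>v \<circ> v = v\<close> \<open>v x = x\<close> \<open>v \<circ> e = v\<close> by blast
qed

lemma sandwich_right_in_structure_group:
  assumes "p \<in> E" "v \<in> E" "v \<circ> e = v"
  shows "e \<circ> p \<circ> v \<in> carrier H"
  unfolding carrier_structure_group_iff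
  using comp_closed[OF comp_closed[OF e_in_E \<open>p \<in> E\<close>] \<open>v \<in> E\<close>] idempotent \<open>v \<circ> e = v\<close>
  by (simp add: o_assoc) (simp add: comp_assoc)

text \<open>The element of \<open>\<Gamma>\<close> is \<open>e \<circ> u \<circ> e\<close> for the minimal idempotent \<open>u = v \<circ> c\<inverse> \<circ> e \<circ> p\<close>,
  where \<open>c = e \<circ> p \<circ> v\<close>.\<close>
lemma inverse_comp_sandwich_in_little_structure_group:
  assumes "v \<in> kerE E" "v \<circ> e = v" "e \<circ> v = e" "p \<in> E"
  shows "inv\<^bsub>H\<^esub> (e \<circ> p \<circ> v) \<circ> (e \<circ> p \<circ> e) \<in> \<Gamma>"
proof -
  define c where "c = e \<circ> p \<circ> v"
  have "c \<in> carrier H"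
    unfolding c_def using assms kerE_subset by (intro sandwich_right_in_structure_group) auto
  define c' where "c' = inv\<^bsub>H\<^esub> c"
  have "c' \<circ> c = e" and c': "c' \<in> E" "e \<circ> c' = c'" "c' \<circ> e = c'"
    using structure_group_inverse[OF \<open>c \<in> carrier H\<close>] carrier_structure_group_iff
    unfolding c'_def by blast+
  define u where "u = v \<circ> c' \<circ> e \<circ> p"
  have "u \<in> kerE E"
    unfolding u_def o_assoc[symmetric]
    using kerE_comp_right[OF \<open>v \<in> kerE E\<close>] comp_closed c'(1) e_in_E \<open>p \<in> E\<close> by simp
  moreover have "u \<circ> u = u"
  proof -
    have "u \<circ> u = v \<circ> (c' \<circ> c) \<circ> c' \<circ> e \<circ> p" by (simp add: u_def c_def o_assoc)
    also have "\<dots> = u" using \<open>c' \<circ> c = e\<close> \<open>v \<circ> e = v\<close> by (simp add: u_def)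
    finally show ?thesis .
  qed
  ultimately have "u \<in> min_idempotents E" by (simp add: min_idempotents_def)
  moreover have "e \<circ> u \<circ> e = c' \<circ> (e \<circ> p \<circ> e)"
    using \<open>e \<circ> v = e\<close> c'(2,3) by (simp add: u_def o_assoc)
  ultimately show ?thesis
    unfolding little_structure_group_def c'_def c_def
    by (metis (mono_tags, lifting) generate.incl mem_Collect_eq)
qed

lemma sandwich_eq_at_little_fixed_point:
  assumes fixed: "\<forall>\<gamma>\<in>\<Gamma>. \<gamma> (e x) = e x" and "x \<in> (\<lambda>p. p (e x)) ` E" and "p \<in> E"
  shows "e (p (e x)) = e (p x)"
proof -
  obtain v where "v \<in> kerE E" "v x = x" "v \<circ> e = v" "e \<circ> v = e"
    using idempotent_fixing_point[OF assms(2)] by blast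
  define c where "c = e \<circ> p \<circ> v"
  have "c \<in> carrier H"
    unfolding c_def using \<open>p \<in> E\<close> \<open>v \<in> kerE E\<close> kerE_subset \<open>v \<circ> e = v\<close>
    by (intro sandwich_right_in_structure_group) auto
  define c' where "c' = inv\<^bsub>H\<^esub> c"
  have "c \<circ> c' = e" "c' \<circ> e = c'"
    using structure_group_inverse[OF \<open>c \<in> carrier H\<close>] carrier_structure_group_iff
    unfolding c'_def by blast+
  have "c' \<circ> (e \<circ> p \<circ> e) \<in> \<Gamma>"
    unfolding c'_def c_def
    by (rule inverse_comp_sandwich_in_little_structure_group) fact+
  then have "c' (p (e x)) = e x"
    using fixed \<open>c' \<circ> e = c'\<close> by (metis comp_apply idempotent_apply)
  have "e (p (e x)) = (c \<circ> c') (e (p (e x)))" using \<open>c \<circ> c' = e\<close> by simp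
  also have "\<dots> = c (c' (p (e x)))" using \<open>c' \<circ> e = c'\<close> by (metis comp_apply)
  also have "\<dots> = e (p (v (e x)))" using \<open>c' (p (e x)) = e x\<close> by (simp add: c_def)
  also have "\<dots> = e (p x)" using \<open>v \<circ> e = v\<close> \<open>v x = x\<close> by (metis comp_apply)
  finally show ?thesis .
qed

lemma e_eq_if_semigroup_proximal:
  assumes "\<forall>\<gamma>\<in>\<Gamma>. \<gamma> (e x) = e x" "\<forall>\<gamma>\<in>\<Gamma>. \<gamma> (e y) = e y"
    and "x \<in> (\<lambda>p. p (e x)) ` E" "y \<in> (\<lambda>p. p (e y)) ` E"
    and "semigroup_proximal E x y"
  shows "e x = e y"
proof (rule proximal_fixed_points_eq)
  obtain p where "p \<in> E" "p x = p y" using assms(5) unfolding semigroup_proximal_def by blast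
  have "(e \<circ> p) (e x) = (e \<circ> p) (e y)"
    using sandwich_eq_at_little_fixed_point[OF assms(1,3) \<open>p \<in> E\<close>]
      sandwich_eq_at_little_fixed_point[OF assms(2,4) \<open>p \<in> E\<close>] \<open>p x = p y\<close> by simp
  then show "semigroup_proximal E (e x) (e y)"
    unfolding semigroup_proximal_def using comp_closed[OF e_in_E \<open>p \<in> E\<close>] by blast
qed simp_all

lemma semigroup_proximal_idempotent_image:
  assumes "q \<in> E" "q \<circ> q = q"
  shows "semigroup_proximal E y (q y)"
  unfolding semigroup_proximal_def using assms by (metis comp_apply)

lemma little_structure_group_fixes_if_transitive:
  assumes trans: "transitive_on F (semigroup_proximal E)"
    and saturated: "\<And>x y. x \<in> F \<Longrightarrow> semigroup_proximal E x y \<Longrightarrow> y \<in> F"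
  shows "\<forall>\<gamma>\<in>\<Gamma>. \<forall>z\<in>e ` F. \<gamma> z = z"
proof (intro ballI)
  fix \<gamma> z assume "\<gamma> \<in> \<Gamma>" "z \<in> e ` F"
  then obtain w where "w \<in> F" "z = e w" by blast
  then have "e z = z" "z \<in> F"
    using saturated semigroup_proximal_idempotent_image[OF e_in_E idempotent] by auto
  show "\<gamma> z = z"
  proof (rule little_structure_group_fixes[OF _ \<open>e z = z\<close> \<open>\<gamma> \<in> \<Gamma>\<close>])
    fix u assume "u \<in> min_idempotents E"
    then have "u \<in> E" "u \<circ> u = u" using kerE_subset by (auto simp: min_idempotents_def)
    have "semigroup_proximal E z (u z)" "semigroup_proximal E (u z) (e (u z))"
      using semigroup_proximal_idempotent_image \<open>u \<in> E\<close> \<open>u \<circ> u = u\<close> e_in_E idempotent by blast+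
    moreover have "u z \<in> F" "e (u z) \<in> F" using calculation saturated \<open>z \<in> F\<close> by blast+
    ultimately have "semigroup_proximal E z (e (u z))"
      using trans \<open>z \<in> F\<close> unfolding transitive_on_def by blast
    then have "z = e (u z)"
      using proximal_fixed_points_eq[OF \<open>e z = z\<close>, of "e (u z)"] by simp
    then show "e (u z) = z" by simp
  qed
qed

theorem transitive_on_semigroup_proximal_iff:
  assumes orbit: "\<And>x. (\<lambda>p. p x) ` E = UNIV"
    and saturated: "\<And>x y. x \<in> F \<Longrightarrow> semigroup_proximal E x y \<Longrightarrow> y \<in> F"
  shows "transitive_on F (semigroup_proximal E) \<longleftrightarrow> (\<forall>\<gamma>\<in>\<Gamma>. \<forall>z\<in>e ` F. \<gamma> z = z)"
proof
  assume "transitive_on F (semigroup_proximal E)"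
  then show "\<forall>\<gamma>\<in>\<Gamma>. \<forall>z\<in>e ` F. \<gamma> z = z"
    using saturated by (rule little_structure_group_fixes_if_transitive)
next
  assume fixing: "\<forall>\<gamma>\<in>\<Gamma>. \<forall>z\<in>e ` F. \<gamma> z = z"
  have "x \<in> (\<lambda>p. p (e x)) ` E" for x using orbit by blast
  then have e_eq: "e x = e y" if "x \<in> F" "y \<in> F" "semigroup_proximal E x y" for x y
    using that fixing by (intro e_eq_if_semigroup_proximal) auto
  have proximal_if_e_eq: "semigroup_proximal E x y" if "e x = e y" for x y
    using that e_in_E unfolding semigroup_proximal_def by blast
  show "transitive_on F (semigroup_proximal E)"
    unfolding transitive_on_def
  proof (intro ballI impI)
    fix x y z assume "x \<in> F" "y \<in> F" "z \<in> F"
      and "semigroup_proximal E x y" "semigroup_proximal E y z"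
    then have "e x = e z" using e_eq by metis
    then show "semigroup_proximal E x z" by (rule proximal_if_e_eq)
  qed
qed

end

section \<open>The Ellis semigroup of a minimal system\<close>

lemma compact_ellis:
  assumes "compact (UNIV :: 'x::topological_space set)"
  shows "compact (ellis (\<alpha> :: 'g \<Rightarrow> 'x \<Rightarrow> 'x))"
  unfolding ellis_def using compact_UNIV_fun[OF assms] closed_closure by (rule compact_Int_closed[of UNIV, simplified])

lemma ellis_action_in: "\<alpha> t \<in> ellis \<alpha>"
  unfolding ellis_def by (rule closure_subset[THEN subsetD]) simp

lemma ellis_nonempty: "ellis \<alpha> \<noteq> {}"
  using ellis_action_in[of \<alpha>] by blast

lemma ellis_comp_closed:
  assumes "group_action_homeo \<alpha>" "p \<in> ellis \<alpha>" "q \<in> ellis \<alpha>"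
  shows "p \<circ> q \<in> ellis \<alpha>"
proof -
  have "\<alpha> t \<circ> q \<in> ellis \<alpha>" for t
  proof -
    have "continuous_on UNIV (\<alpha> t)" "\<And>s. \<alpha> t \<circ> \<alpha> s = \<alpha> (t + s)"
      using assms(1) by (simp_all add: group_action_homeo_def)
    then have "(\<lambda>r. \<alpha> t \<circ> r) ` closure (range \<alpha>) \<subseteq> ellis \<alpha>"
      unfolding ellis_def
      by (intro image_closure_subset continuous_on_comp_left) (auto intro: ellis_action_in[unfolded ellis_def])
    then show ?thesis using assms(3) unfolding ellis_def by blast
  qed
  then have "(\<lambda>r. r \<circ> q) ` closure (range \<alpha>) \<subseteq> ellis \<alpha>"
    unfolding ellis_def by (intro image_closure_subset continuous_on_comp_right) auto
  then show ?thesis using assms(2) unfolding ellis_def by blast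
qed

lemma compact_fun_semigroup_ellis:
  assumes "compact (UNIV :: 'x::t2_space set)" "group_action_homeo (\<alpha> :: 'g::group_add \<Rightarrow> 'x \<Rightarrow> 'x)"
  shows "compact_fun_semigroup (ellis \<alpha>)"
proof
  show "compact (ellis \<alpha>)" by (rule compact_ellis[OF assms(1)])
  show "ellis \<alpha> \<noteq> {}" by (rule ellis_nonempty)
  show "p \<circ> q \<in> ellis \<alpha>" if "p \<in> ellis \<alpha>" "q \<in> ellis \<alpha>" for p q
    using ellis_comp_closed[OF assms(2) that] .
qed

lemma ellis_orbit_eq_UNIV:
  assumes "compact (UNIV :: 'x::t2_space set)" "minimal_system (\<alpha> :: 'g::group_add \<Rightarrow> 'x \<Rightarrow> 'x)"
  shows "(\<lambda>p. p x) ` ellis \<alpha> = UNIV"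
proof -
  have "closed ((\<lambda>p. p x) ` ellis \<alpha>)"
    by (intro compact_imp_closed compact_continuous_image continuous_on_eval compact_ellis assms(1))
  moreover have "range (\<lambda>t. \<alpha> t x) \<subseteq> (\<lambda>p. p x) ` ellis \<alpha>"
    by (auto intro: rev_image_eqI[OF ellis_action_in])
  ultimately have "closure (range (\<lambda>t. \<alpha> t x)) \<subseteq> (\<lambda>p. p x) ` ellis \<alpha>"
    by (rule closure_minimal[rotated])
  then show ?thesis using assms(2) unfolding minimal_system_def by auto
qed

text \<open>Both directions use the continuity of \<open>p \<mapsto> d(p x, p y)\<close> on the compact set \<open>ellis \<alpha>\<close>:
  its minimum is at most the infimum over \<open>range \<alpha>\<close>, and its values on the closure are bounded below
  by that infimum.\<close>
lemma proximal_iff_semigroup_proximal: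
  fixes \<alpha> :: "'g \<Rightarrow> 'x::metric_space \<Rightarrow> 'x"
  assumes "compact (UNIV :: 'x set)"
  shows "proximal \<alpha> x y \<longleftrightarrow> semigroup_proximal (ellis \<alpha>) x y"
proof -
  define f where "f p = dist (p x) (p y)" for p :: "'x \<Rightarrow> 'x"
  have cont: "continuous_on S f" for S
    unfolding f_def by (intro continuous_on_dist continuous_on_eval)
  have bdd: "bdd_below (range (f \<circ> \<alpha>))" by (auto simp: f_def intro: bdd_belowI[of _ 0])
  have "proximal \<alpha> x y \<longleftrightarrow> (INF t. f (\<alpha> t)) = 0" by (simp add: proximal_def f_def)
  also have "\<dots> \<longleftrightarrow> (\<exists>p\<in>ellis \<alpha>. f p = 0)"
  proof
    assume "(INF t. f (\<alpha> t)) = 0"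
    obtain p where "p \<in> ellis \<alpha>" and min: "\<And>q. q \<in> ellis \<alpha> \<Longrightarrow> f p \<le> f q"
      using continuous_attains_inf[OF compact_ellis[OF assms] ellis_nonempty cont] by blast
    then have "f p \<le> (INF t. f (\<alpha> t))" by (intro cINF_greatest) (auto simp: ellis_action_in)
    then have "f p = 0" using \<open>(INF t. f (\<alpha> t)) = 0\<close> by (simp add: f_def)
    then show "\<exists>p\<in>ellis \<alpha>. f p = 0" using \<open>p \<in> ellis \<alpha>\<close> by blast
  next
    assume "\<exists>p\<in>ellis \<alpha>. f p = 0"
    then obtain p where "p \<in> ellis \<alpha>" "f p = 0" by blast
    have "f ` closure (range \<alpha>) \<subseteq> {(INF t. f (\<alpha> t))..}"
      by (rule image_closure_subset[OF cont closed_atLeast]) (auto intro: cINF_lower[OF bdd[unfolded comp_def]])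
    moreover have "f p \<in> f ` closure (range \<alpha>)" using \<open>p \<in> ellis \<alpha>\<close> unfolding ellis_def by (rule imageI)
    ultimately have "(INF t. f (\<alpha> t)) \<le> 0" using \<open>f p = 0\<close> by auto
    moreover have "(INF t. f (\<alpha> t)) \<ge> 0" by (rule cINF_greatest) (auto simp: f_def)
    ultimately show "(INF t. f (\<alpha> t)) = 0" by simp
  qed
  also have "\<dots> \<longleftrightarrow> semigroup_proximal (ellis \<alpha>) x y" by (simp add: semigroup_proximal_def f_def)
  finally show ?thesis .
qed

lemma proximal_imp_same_fibre:
  fixes \<alpha> :: "'g::group_add \<Rightarrow> 'x::metric_space \<Rightarrow> 'x" and \<beta> :: "'g \<Rightarrow> 'y::metric_space \<Rightarrow> 'y"
  assumes "compact (UNIV :: 'x set)"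
    and factor: "factor_map_onto \<alpha> UNIV \<beta> \<pi>" and equicontinuous: "equicontinuous_on UNIV \<beta>"
    and "proximal \<alpha> a b"
  shows "\<pi> a = \<pi> b"
proof (rule ccontr)
  assume "\<pi> a \<noteq> \<pi> b"
  define \<epsilon> where "\<epsilon> = dist (\<pi> a) (\<pi> b)"
  have "\<epsilon> > 0" using \<open>\<pi> a \<noteq> \<pi> b\<close> by (simp add: \<epsilon>_def)
  have "continuous_on UNIV \<pi>" and equivariant: "\<And>t x. \<pi> (\<alpha> t x) = \<beta> t (\<pi> x)"
    and action: "\<And>s t z. \<beta> (s + t) z = \<beta> s (\<beta> t z)" "\<And>z. \<beta> 0 z = z"
    using factor unfolding factor_map_onto_def group_action_homeo_on_def by auto
  have inverse: "\<beta> (- t) (\<beta> t z) = z" for t z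
    using action(1)[of "- t" t z] action(2) by simp
  have "\<exists>\<delta>>0. \<forall>y y'. dist y y' < \<delta> \<longrightarrow> (\<forall>t. dist (\<beta> t y) (\<beta> t y') < \<epsilon>)"
    using equicontinuous \<open>\<epsilon> > 0\<close> by (simp add: equicontinuous_on_def)
  then obtain \<delta> where "\<delta> > 0" and \<delta>: "\<And>y y' t. dist y y' < \<delta> \<Longrightarrow> dist (\<beta> t y) (\<beta> t y') < \<epsilon>"
    by blast
  have "uniformly_continuous_on UNIV \<pi>"
    by (rule compact_uniformly_continuous[OF \<open>continuous_on UNIV \<pi>\<close> assms(1)])
  then have "\<exists>\<eta>>0. \<forall>x x'. dist x' x < \<eta> \<longrightarrow> dist (\<pi> x') (\<pi> x) < \<delta>"
    using \<open>\<delta> > 0\<close> by (simp add: uniformly_continuous_on_def)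
  then obtain \<eta> where "\<eta> > 0" and \<eta>: "\<And>x x'. dist x' x < \<eta> \<Longrightarrow> dist (\<pi> x') (\<pi> x) < \<delta>"
    by blast
  have "bdd_below (range (\<lambda>t. dist (\<alpha> t a) (\<alpha> t b)))"
    by (auto intro: bdd_belowI[of _ 0])
  moreover have "(INF t. dist (\<alpha> t a) (\<alpha> t b)) < \<eta>" using assms(4) \<open>\<eta> > 0\<close> by (simp add: proximal_def)
  ultimately obtain t where "dist (\<alpha> t a) (\<alpha> t b) < \<eta>"
    by (auto simp: cINF_less_iff)
  then have "dist (\<pi> (\<alpha> t a)) (\<pi> (\<alpha> t b)) < \<delta>" by (rule \<eta>)
  then have "dist (\<beta> t (\<pi> a)) (\<beta> t (\<pi> b)) < \<delta>" by (simp add: equivariant)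
  then have "dist (\<beta> (- t) (\<beta> t (\<pi> a))) (\<beta> (- t) (\<beta> t (\<pi> b))) < \<epsilon>" by (rule \<delta>)
  then have "dist (\<pi> a) (\<pi> b) < \<epsilon>" by (simp only: inverse)
  then show False by (simp add: \<epsilon>_def)
qed

theorem mainTheorem3:
  fixes \<alpha> :: "'g::group_add \<Rightarrow> 'x::metric_space \<Rightarrow> 'x"
    and \<beta> :: "'g \<Rightarrow> 'y::metric_space \<Rightarrow> 'y"
    and \<pi> :: "'x \<Rightarrow> 'y"
    and e :: "'x \<Rightarrow> 'x"
    and \<xi> :: 'y
  assumes "compact (UNIV :: 'x set)"
    and "group_action_homeo \<alpha>"
    and "minimal_system \<alpha>"
    and "max_equicontinuous_factor \<alpha> \<beta> \<pi>"
    and "e \<in> min_idempotents (ellis \<alpha>)"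
  shows "(transitive_on (\<pi> -` {\<xi>}) (proximal \<alpha>) \<longleftrightarrow>
           (\<forall>g \<in> little_structure_group (ellis \<alpha>) e. \<forall>x \<in> e ` (\<pi> -` {\<xi>}). g x = x))
       \<and> (transitive_on UNIV (proximal \<alpha>) \<longleftrightarrow> little_structure_group (ellis \<alpha>) e = {e})"
proof -
  interpret compact_fun_semigroup_min_idempotent "ellis \<alpha>" e
    using compact_fun_semigroup_ellis[OF assms(1,2)] assms(5)
    by (simp add: compact_fun_semigroup_min_idempotent_def compact_fun_semigroup_min_idempotent_axioms_def)
  have proximal: "proximal \<alpha> = semigroup_proximal (ellis \<alpha>)"
    using proximal_iff_semigroup_proximal[OF assms(1)] by (intro ext)
  have orbit: "\<And>x. (\<lambda>p. p x) ` ellis \<alpha> = UNIV"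
    by (rule ellis_orbit_eq_UNIV[OF assms(1,3)])
  have factor: "factor_map_onto \<alpha> UNIV \<beta> \<pi>" and equicontinuous: "equicontinuous_on UNIV \<beta>"
    using assms(4) by (simp_all add: max_equicontinuous_factor_def)
  have "\<pi> x = \<pi> y" if "semigroup_proximal (ellis \<alpha>) x y" for x y
    using proximal_imp_same_fibre[OF assms(1) factor equicontinuous, of x y] that proximal by simp
  then have fibre: "transitive_on (\<pi> -` {\<xi>}) (proximal \<alpha>) \<longleftrightarrow> (\<forall>\<gamma>\<in>\<Gamma>. \<forall>z\<in>e ` (\<pi> -` {\<xi>}). \<gamma> z = z)"
    unfolding proximal by (intro transitive_on_semigroup_proximal_iff[OF orbit]) auto
  have "transitive_on UNIV (proximal \<alpha>) \<longleftrightarrow> \<Gamma> = {e}"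
    unfolding proximal little_structure_group_eq_singleton_iff
    by (simp add: transitive_on_semigroup_proximal_iff[OF orbit])
  with fibre show ?thesis by blast
qed

end
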